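(* Let $A>2$ be a fixed positive integer and let $(x_m)$ be defined by $x_0=0$, $x_1=1$, $x_{m+1}=Ax_m-x_{m-1}$. Let $n\ge3$ and consider the Markov chain on $\{0,1,\dots,n-1\}$ with $n\times n$ transition probability matrix $\mathbf P(A)=(P_{ij})$ given by: $P_{00}=1-\frac1A$, $P_{01}=\frac1A$; $P_{10}=1-\frac1A$, $P_{12}=\frac1A$; for $2\le i\le n-2$: $P_{i0}=1-\frac2A$, $P_{i,i-1}=\frac1A$, $P_{i,i+1}=\frac1A$; $P_{n-1,0}=1-\frac1A$, $P_{n-1,n-2}=\frac1A$; all other entries $0$. Then the steady state probability vector $\vec\pi=(\pi_0,\dots,\pi_{n-1})$ (the unique probability vector with $\vec\pi=\vec\pi\mathbf P(A)$) is given by $$\pi_i=\frac{x_{n-i}}{\sum_{l=1}^n x_l},\qquad i=0,1,\dots,n-1.$$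
   Context: The sequence $(x_m)$ defined by $x_0=0,x_1=1,x_{m+1}=Ax_m-x_{m-1}$ is called a balancing-like sequence; for $A=6$ it is the sequence of balancing numbers. *)

theory Defs
  imports Complex_Main
begin

fun bal :: "int \<Rightarrow> nat \<Rightarrow> int" where
  "bal A 0 = 0"
| "bal A (Suc 0) = 1"
| "bal A (Suc (Suc m)) = A * bal A (Suc m) - bal A m"

definition transP :: "int \<Rightarrow> nat \<Rightarrow> nat \<Rightarrow> nat \<Rightarrow> real" where
  "transP A n i j =
     (if i = 0 then (if j = 0 then 1 - 1 / real_of_int A else if j = 1 then 1 / real_of_int A else 0)
      else if i = 1 then (if j = 0 then 1 - 1 / real_of_int A else if j = 2 then 1 / real_of_int A else 0)
      else if i = n - 1 then (if j = 0 then 1 - 1 / real_of_int A else if j = n - 2 then 1 / real_of_int A else 0)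
      else if 2 \<le> i \<and> i \<le> n - 2 then
        (if j = 0 then 1 - 2 / real_of_int A else if j = i - 1 \<or> j = i + 1 then 1 / real_of_int A else 0)
      else 0)"

definition stationary_dist :: "nat \<Rightarrow> (nat \<Rightarrow> nat \<Rightarrow> real) \<Rightarrow> (nat \<Rightarrow> real) \<Rightarrow> bool" where
  "stationary_dist n Q p \<longleftrightarrow>
     (\<forall>i<n. 0 \<le> p i) \<and> (\<Sum>i<n. p i) = 1 \<and>
     (\<forall>j<n. p j = (\<Sum>i<n. p i * Q i j))"

end

theory Submission
  imports Defs
begin

(* Read \<pi> backwards and pad it by a zero: q = rev_vec n \<pi>, i.e. q k = \<pi> (n - k) for
   1 \<le> k \<le> n and q 0 = 0.  The balance equation of column n - k, for 1 \<le> k \<le> n - 1, says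
   A q k = q (k - 1) + q (k + 1), so q is the multiple q 1 * x k of the balancing-like
   sequence.  The balance equation of column 0 carries no further information, because P(A)
   is stochastic and \<pi> sums to 1.  Since x k > 0 for k \<ge> 1 when A \<ge> 2, normalising gives
   the unique stationary distribution. *)

lemma bal_nonneg_less_Suc: "2 \<le> A \<Longrightarrow> 0 \<le> bal A m \<and> bal A m < bal A (Suc m)"
proof (induction m)
  case (Suc m)
  then have "0 \<le> bal A m" "bal A m < bal A (Suc m)" by auto
  moreover have "2 * bal A (Suc m) \<le> A * bal A (Suc m)"
    using Suc.prems calculation by (intro mult_right_mono) auto
  moreover have "bal A (Suc (Suc m)) = A * bal A (Suc m) - bal A m" by simp
  ultimately show ?case by linarith
qed simp

lemma bal_pos: "2 \<le> A \<Longrightarrow> 0 < m \<Longrightarrow> 0 < bal A m"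
  using bal_nonneg_less_Suc[of A "m - 1"] by simp

lemma recurrence_iff_eq_scaled_bal:
  fixes f :: "nat \<Rightarrow> 'a::comm_ring_1"
  assumes "f 0 = 0"
  shows "(\<forall>m. m + 2 \<le> N \<longrightarrow> f (m + 2) = of_int A * f (m + 1) - f m)
     \<longleftrightarrow> (\<forall>k\<le>N. f k = f 1 * of_int (bal A k))"
proof
  assume rec: "\<forall>m. m + 2 \<le> N \<longrightarrow> f (m + 2) = of_int A * f (m + 1) - f m"
  have "k \<le> N \<Longrightarrow> f k = f 1 * of_int (bal A k)" for k
  proof (induction k rule: induct_nat_012)
    case (ge2 m)
    moreover have "f (m + 2) = of_int A * f (m + 1) - f m"
      using rec ge2.prems by simp
    ultimately show ?case by (simp add: algebra_simps)
  qed (simp_all add: assms)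
  then show "\<forall>k\<le>N. f k = f 1 * of_int (bal A k)" by blast
next
  assume scaled: "\<forall>k\<le>N. f k = f 1 * of_int (bal A k)"
  show "\<forall>m. m + 2 \<le> N \<longrightarrow> f (m + 2) = of_int A * f (m + 1) - f m"
  proof (intro allI impI)
    fix m
    assume "m + 2 \<le> N"
    then have "f (m + 2) = f 1 * of_int (A * bal A (m + 1) - bal A m)"
      and "f (m + 1) = f 1 * of_int (bal A (m + 1))" and "f m = f 1 * of_int (bal A m)"
      using scaled[rule_format, of "m + 2"] scaled[rule_format, of "m + 1"] scaled[rule_format, of m]
      by (simp_all add: numeral_2_eq_2)
    then show "f (m + 2) = of_int A * f (m + 1) - f m"
      by (simp add: algebra_simps)
  qed
qed

lemma stationary_eq_from_others:
  fixes Q :: "nat \<Rightarrow> nat \<Rightarrow> 'a::comm_ring_1"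
  assumes stochastic: "\<And>i. i < n \<Longrightarrow> (\<Sum>j<n. Q i j) = 1"
    and "(\<Sum>i<n. p i) = 1" and "j0 < n"
    and others: "\<And>j. j < n \<Longrightarrow> j \<noteq> j0 \<Longrightarrow> p j = (\<Sum>i<n. p i * Q i j)"
  shows "p j0 = (\<Sum>i<n. p i * Q i j0)"
proof -
  define pQ where "pQ j = (\<Sum>i<n. p i * Q i j)" for j
  have "(\<Sum>j<n. pQ j) = (\<Sum>i<n. p i * (\<Sum>j<n. Q i j))"
    unfolding pQ_def sum_distrib_left by (rule sum.swap)
  also have "\<dots> = (\<Sum>j<n. p j)"
    using stochastic by simp
  finally have "pQ j0 + (\<Sum>j\<in>{..<n} - {j0}. pQ j) = p j0 + (\<Sum>j\<in>{..<n} - {j0}. p j)"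
    using \<open>j0 < n\<close> by (simp add: sum.remove)
  moreover have "(\<Sum>j\<in>{..<n} - {j0}. pQ j) = (\<Sum>j\<in>{..<n} - {j0}. p j)"
    using others by (simp add: pQ_def)
  ultimately show ?thesis by (simp add: pQ_def)
qed

lemma stationary_dist_iff_columns_pos:
  assumes "\<And>i. i < n \<Longrightarrow> (\<Sum>j<n. Q i j) = 1"
  shows "stationary_dist n Q p \<longleftrightarrow>
    (\<forall>i<n. 0 \<le> p i) \<and> (\<Sum>i<n. p i) = 1 \<and> (\<forall>j. 0 < j \<and> j < n \<longrightarrow> p j = (\<Sum>i<n. p i * Q i j))"
proof -
  have "(\<forall>j<n. p j = (\<Sum>i<n. p i * Q i j)) \<longleftrightarrow> (\<forall>j. 0 < j \<and> j < n \<longrightarrow> p j = (\<Sum>i<n. p i * Q i j))"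
    if "(\<Sum>i<n. p i) = 1"
  proof (intro iffI allI impI)
    assume others: "\<forall>j. 0 < j \<and> j < n \<longrightarrow> p j = (\<Sum>i<n. p i * Q i j)"
    fix j
    assume "j < n"
    then show "p j = (\<Sum>i<n. p i * Q i j)"
      using assms that others by (cases "j = 0") (auto intro: stationary_eq_from_others)
  qed simp
  then show ?thesis
    unfolding stationary_dist_def by blast
qed

lemma prob_vector_proportional_iff:
  fixes p w :: "nat \<Rightarrow> real"
  assumes "j < n" and "w j = 1" and "\<And>i. i < n \<Longrightarrow> 0 < w i"
  shows "(\<forall>i<n. 0 \<le> p i) \<and> (\<Sum>i<n. p i) = 1 \<and> (\<forall>i<n. p i = p j * w i)
    \<longleftrightarrow> (\<forall>i<n. p i = w i / (\<Sum>i<n. w i))"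
proof -
  have "0 < (\<Sum>i<n. w i)"
    using assms by (intro sum_pos) auto
  show ?thesis
  proof
    assume H: "(\<forall>i<n. 0 \<le> p i) \<and> (\<Sum>i<n. p i) = 1 \<and> (\<forall>i<n. p i = p j * w i)"
    define c where "c = p j"
    from H have sum_eq_1: "(\<Sum>i<n. p i) = 1" and scaled: "\<forall>i<n. p i = c * w i"
      unfolding c_def by blast+
    have "c * (\<Sum>i<n. w i) = 1"
      using scaled sum_eq_1 by (simp add: sum_distrib_left)
    with scaled \<open>0 < (\<Sum>i<n. w i)\<close> show "\<forall>i<n. p i = w i / (\<Sum>i<n. w i)"
      by (auto simp: field_simps)
  next
    assume "\<forall>i<n. p i = w i / (\<Sum>i<n. w i)"
    then show "(\<forall>i<n. 0 \<le> p i) \<and> (\<Sum>i<n. p i) = 1 \<and> (\<forall>i<n. p i = p j * w i)"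
      using assms \<open>0 < (\<Sum>i<n. w i)\<close> by (auto simp: less_imp_le sum_divide_distrib[symmetric])
  qed
qed

lemma transP_row_sum:
  assumes "3 \<le> n" and "i < n"
  shows "(\<Sum>j<n. transP A n i j) = 1"
proof -
  have "(\<Sum>j<n. transP A n i j) = (\<Sum>j\<in>{0, i - 1, i + 1} \<inter> {..<n}. transP A n i j)"
    using assms by (intro sum.mono_neutral_right) (auto simp: transP_def)
  also have "\<dots> = 1"
  proof -
    consider "i = 0" | "i = 1" | "i = n - 1" | "2 \<le> i" "i < n - 1"
      using assms by linarith
    then show ?thesis
    proof cases
      case 1
      then have "{0, i - 1, i + 1} \<inter> {..<n} = {0, 1}" using assms by auto
      then show ?thesis using 1 by (simp add: transP_def)
    next
      case 2
      then have "{0, i - 1, i + 1} \<inter> {..<n} = {0, 2}" using assms by auto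
      then show ?thesis using 2 by (simp add: transP_def)
    next
      case 3
      then have "{0, i - 1, i + 1} \<inter> {..<n} = {0, n - 2}" "i \<noteq> 0" "i \<noteq> 1" "n - 2 \<noteq> 0"
        using assms by auto
      then show ?thesis using 3 by (simp add: transP_def)
    next
      case 4
      then have "{0, i - 1, i + 1} \<inter> {..<n} = {0, i - 1, i + 1}" using assms by auto
      then show ?thesis using 4 assms by (simp add: transP_def)
    qed
  qed
  finally show ?thesis .
qed

lemma transP_column_gt0:
  assumes "0 < j" and "j < n" and "i < n"
  shows "transP A n i j = (if i + 1 = j \<or> i = j + 1 then 1 / real_of_int A else 0)"
  using assms by (auto simp: transP_def)

definition rev_vec :: "nat \<Rightarrow> (nat \<Rightarrow> 'a::zero) \<Rightarrow> nat \<Rightarrow> 'a" where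
  "rev_vec n p k = (if k = 0 then 0 else p (n - k))"

lemma sum_transP_column:
  assumes "m + 2 \<le> n"
  shows "(\<Sum>i<n. p i * transP A n i (n - Suc m))
    = (rev_vec n p (m + 2) + rev_vec n p m) / real_of_int A"
proof -
  have "(\<Sum>i<n. p i * transP A n i (n - Suc m))
      = (\<Sum>i\<in>{n - (m + 2), n - m} \<inter> {..<n}. p i / real_of_int A)"
    using assms by (intro sum.mono_neutral_cong_right) (auto simp: transP_column_gt0)
  also have "\<dots> = (rev_vec n p (m + 2) + rev_vec n p m) / real_of_int A"
    using assms by (cases m) (auto simp: rev_vec_def add_divide_distrib)
  finally show ?thesis .
qed

lemma transP_columns_iff_recurrence:
  assumes "A \<noteq> 0"
  shows "(\<forall>j. 0 < j \<and> j < n \<longrightarrow> p j = (\<Sum>i<n. p i * transP A n i j)) \<longleftrightarrow>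
    (\<forall>m. m + 2 \<le> n \<longrightarrow> rev_vec n p (m + 2) = of_int A * rev_vec n p (m + 1) - rev_vec n p m)"
proof -
  have reindex: "(\<forall>j. 0 < j \<and> j < n \<longrightarrow> P j) \<longleftrightarrow> (\<forall>m. m + 2 \<le> n \<longrightarrow> P (n - Suc m))" for P
  proof
    assume P: "\<forall>m. m + 2 \<le> n \<longrightarrow> P (n - Suc m)"
    show "\<forall>j. 0 < j \<and> j < n \<longrightarrow> P j"
    proof (intro allI impI)
      fix j
      assume "0 < j \<and> j < n"
      then have "n - Suc j + 2 \<le> n" and "n - Suc (n - Suc j) = j" by auto
      then show "P j" using P[rule_format, of "n - Suc j"] by simp
    qed
  qed auto
  show ?thesis
    unfolding reindex using assms
    by (intro all_cong1 imp_cong refl) (auto simp: sum_transP_column rev_vec_def field_simps)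
qed

lemma rev_vec_proportional_iff:
  fixes w :: "nat \<Rightarrow> 'a::comm_ring_1"
  assumes "w 0 = 0" and "w 1 = 1"
  shows "(\<forall>k\<le>n. rev_vec n p k = rev_vec n p 1 * w k) \<longleftrightarrow> (\<forall>i<n. p i = p (n - 1) * w (n - i))"
proof
  assume scaled: "\<forall>k\<le>n. rev_vec n p k = rev_vec n p 1 * w k"
  show "\<forall>i<n. p i = p (n - 1) * w (n - i)"
  proof (intro allI impI)
    fix i
    assume "i < n"
    then show "p i = p (n - 1) * w (n - i)"
      using scaled[rule_format, of "n - i"] by (simp add: rev_vec_def)
  qed
next
  assume scaled: "\<forall>i<n. p i = p (n - 1) * w (n - i)"
  show "\<forall>k\<le>n. rev_vec n p k = rev_vec n p 1 * w k"
  proof (intro allI impI)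
    fix k
    assume "k \<le> n"
    then show "rev_vec n p k = rev_vec n p 1 * w k"
      using scaled[rule_format, of "n - k"] assms by (cases "k = 0") (simp_all add: rev_vec_def)
  qed
qed

lemma stationary_dist_transP_iff:
  assumes "3 \<le> n" and "A \<noteq> 0"
  shows "stationary_dist n (transP A n) p \<longleftrightarrow>
    (\<forall>i<n. 0 \<le> p i) \<and> (\<Sum>i<n. p i) = 1 \<and> (\<forall>i<n. p i = p (n - 1) * real_of_int (bal A (n - i)))"
proof -
  have "(\<forall>j. 0 < j \<and> j < n \<longrightarrow> p j = (\<Sum>i<n. p i * transP A n i j)) \<longleftrightarrow>
      (\<forall>m. m + 2 \<le> n \<longrightarrow> rev_vec n p (m + 2) = of_int A * rev_vec n p (m + 1) - rev_vec n p m)"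
    using assms(2) by (rule transP_columns_iff_recurrence)
  also have "\<dots> \<longleftrightarrow> (\<forall>k\<le>n. rev_vec n p k = rev_vec n p 1 * of_int (bal A k))"
    by (rule recurrence_iff_eq_scaled_bal) (simp add: rev_vec_def)
  also have "\<dots> \<longleftrightarrow> (\<forall>i<n. p i = p (n - 1) * real_of_int (bal A (n - i)))"
    by (rule rev_vec_proportional_iff) simp_all
  finally show ?thesis
    using assms(1) by (simp add: stationary_dist_iff_columns_pos transP_row_sum)
qed

theorem theorem5p1:
  fixes A :: int and n :: nat
  assumes "A > 2" and "n \<ge> 3"
  shows "\<forall>p :: nat \<Rightarrow> real.
           stationary_dist n (transP A n) p \<longleftrightarrow>
           (\<forall>i<n. p i = real_of_int (bal A (n - i)) / (\<Sum>l=1..n. real_of_int (bal A l)))"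
proof
  fix p :: "nat \<Rightarrow> real"
  let ?x = "\<lambda>k. real_of_int (bal A k)"
  have "stationary_dist n (transP A n) p \<longleftrightarrow>
      (\<forall>i<n. 0 \<le> p i) \<and> (\<Sum>i<n. p i) = 1 \<and> (\<forall>i<n. p i = p (n - 1) * ?x (n - i))"
    using assms by (intro stationary_dist_transP_iff) auto
  also have "\<dots> \<longleftrightarrow> (\<forall>i<n. p i = ?x (n - i) / (\<Sum>i<n. ?x (n - i)))"
    using assms by (intro prob_vector_proportional_iff) (auto intro: bal_pos)
  also have "(\<Sum>i<n. ?x (n - i)) = (\<Sum>l=1..n. ?x l)"
    using sum.atLeastLessThan_rev_at_least_Suc_atMost[of "\<lambda>i. ?x (n - i)" 0 n]
    by (simp add: atLeast0LessThan)
  finally show "stationary_dist n (transP A n) p \<longleftrightarrow>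
      (\<forall>i<n. p i = ?x (n - i) / (\<Sum>l=1..n. ?x l))" .
qed

end
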